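(* Let $n\geq p\geq 1$ and $k\geq 2$ be integers. Let $u$ be a length-$p$ word over $\Sigma_k$, let $b[1..p]$ be the border indicator of $u$ and let $a[1..p]$ be the unbordered prefix indicator of $u$. Then \[B_k(u,n) = \begin{cases} \sum\limits_{i=1}^{n-p}a[i]k^{n-p-i} + \sum\limits_{i=n-p+1}^{\lfloor n/2\rfloor} a[i]\,b[i-(n-p)], & \text{if } n \leq 2p;\\[2mm] \sum\limits_{i=1}^p a[i] k^{n-p-i} + \sum\limits_{i=p+1}^{\lfloor n/2\rfloor} \bigl(k^{i-p} - B_k(u,i)\bigr)k^{n-2i}, & \text{otherwise.} \end{cases}\]
   Context: $\Sigma_k=\{1,2,\ldots,k\}$. A border of a word $w$ is a word that is both a non-empty proper prefix and a non-empty proper suffix of $w$; $w$ is bordered if it has a border and unbordered otherwise. For a word $u$ and integer $m\ge |u|$, $B_k(u,m)$ denotes the number of length-$m$ bordered words over $\Sigma_k$ having $u$ as a prefix. For a word $u=u_1\cdots u_p$: its unbordered prefix indicator is the array $a[1..p]$ with $a[i]=1$ if $u_1\cdots u_i$ is unbordered and $a[i]=0$ otherwise; its border indicator is the array $b[1..p]$ with $b[i]=1$ if $u$ has a border of length $i$ and $b[i]=0$ otherwise. *)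

theory Defs
  imports Main
begin

definition bordered :: "nat list \<Rightarrow> bool" where
  "bordered w \<longleftrightarrow> (\<exists>l. 0 < l \<and> l < length w \<and> take l w = drop (length w - l) w)"

definition Bk :: "nat \<Rightarrow> nat list \<Rightarrow> nat \<Rightarrow> nat" where
  "Bk k u m = card {w. length w = m \<and> set w \<subseteq> {1..k} \<and> take (length u) w = u \<and> bordered w}"

text \<open>Unbordered prefix indicator a[i] (1-based, i = 1..length u).\<close>
definition unb_ind :: "nat list \<Rightarrow> nat \<Rightarrow> nat" where
  "unb_ind u i = (if bordered (take i u) then 0 else 1)"

definition border_ind :: "nat list \<Rightarrow> nat \<Rightarrow> nat" where
  "border_ind u i = (if 0 < i \<and> i < length u \<and> take i u = drop (length u - i) u then 1 else 0)"

end

theory Submission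
  imports Defs
begin

text \<open>The shortest border of a bordered word w is unbordered, has length at most |w|/2, and
  is the only unbordered border of w. Hence the bordered words of length n
  with prefix u split according to the length i \<in> [1, n/2] of their unique unbordered border,
  i.e. into words x m x with x unbordered and |x| = i.
  If i \<le> p then x is the prefix u[1..i], so such a word exists only if u[1..i] is unbordered,
  and it is determined by its prefix u and its suffix u[1..i]: when these do not overlap
  (p + i \<le> n) the k^(n-p-i) letters in between are free; when they overlap, the only
  candidate is consistent iff u has a border of length i - (n - p).
  If i > p then x ranges over the k^(i-p) - B_k(u,i) unbordered words of length i with prefix u,
  and m over all k^(n-2i) words.\<close>

definition is_border :: "nat \<Rightarrow> nat list \<Rightarrow> bool" where
  "is_border l w \<longleftrightarrow> 0 < l \<and> l < length w \<and> take l w = drop (length w - l) w"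

lemma bordered_iff_is_border: "bordered w \<longleftrightarrow> (\<exists>l. is_border l w)"
  unfolding bordered_def is_border_def ..

lemma is_border_take:
  assumes "is_border l w" "is_border l' w" "l' < l"
  shows "is_border l' (take l w)"
proof -
  have "take l' (take l w) = take l' w"
    using assms(3) by simp
  also have "\<dots> = drop (length w - l') w"
    using assms(2) unfolding is_border_def by simp
  also have "\<dots> = drop (l - l') (drop (length w - l) w)"
    using assms unfolding is_border_def by (simp add: add.commute)
  also have "\<dots> = drop (l - l') (take l w)"
    using assms(1) unfolding is_border_def by simp
  finally show ?thesis using assms unfolding is_border_def by simp
qed

lemma is_border_trans:
  assumes "is_border l w" "is_border l' (take l w)"
  shows "is_border l' w"
proof -
  have "take l' w = take l' (take l w)"
    using assms(2) unfolding is_border_def by simp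
  also have "\<dots> = drop (l - l') (take l w)"
    using assms unfolding is_border_def by simp
  also have "\<dots> = drop (length w - l') w"
    using assms unfolding is_border_def by (simp add: add.commute)
  finally show ?thesis using assms unfolding is_border_def by simp
qed

lemma is_border_overlap:
  assumes "is_border l w" "length w < 2 * l"
  shows "is_border (2 * l - length w) (take l w)"
proof -
  let ?n = "length w"
  have "drop (?n - l) (take l w) = take (l - (?n - l)) (drop (?n - l) w)"
    by (rule drop_take)
  also have "\<dots> = take (2 * l - ?n) (take l w)"
    using assms unfolding is_border_def by (simp add: mult_2)
  finally show ?thesis using assms unfolding is_border_def by (auto simp: min_def)
qed

definition unbordered_border :: "nat \<Rightarrow> nat list \<Rightarrow> bool" where
  "unbordered_border i w \<longleftrightarrow> is_border i w \<and> \<not> bordered (take i w)"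

lemma bordered_iff_unbordered_border:
  "bordered w \<longleftrightarrow> (\<exists>i. 2 * i \<le> length w \<and> unbordered_border i w)"
proof
  assume "bordered w"
  then have ex: "\<exists>l. is_border l w" by (simp add: bordered_iff_is_border)
  define l where "l = (LEAST l. is_border l w)"
  have l: "is_border l w" unfolding l_def using ex by (rule LeastI_ex)
  have shortest: "\<not> is_border l' w" if "l' < l" for l'
    using that not_less_Least unfolding l_def by blast
  have unb: "\<not> bordered (take l w)"
    using is_border_trans[OF l] shortest unfolding bordered_iff_is_border
    by (metis is_border_def length_take min_less_iff_conj)
  moreover have "2 * l \<le> length w"
    using is_border_overlap[OF l] unb unfolding bordered_iff_is_border by force
  ultimately show "\<exists>i. 2 * i \<le> length w \<and> unbordered_border i w"
    using l unfolding unbordered_border_def by blast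
next
  assume "\<exists>i. 2 * i \<le> length w \<and> unbordered_border i w"
  then show "bordered w"
    unfolding unbordered_border_def bordered_iff_is_border by blast
qed

lemma unbordered_border_unique:
  assumes "unbordered_border i w" "unbordered_border j w"
  shows "i = j"
  using assms is_border_take[of i w j] is_border_take[of j w i]
  unfolding unbordered_border_def bordered_iff_is_border by (metis linorder_neqE_nat)

lemma card_bordered_eq_sum:
  assumes "finite W" "\<And>w. w \<in> W \<Longrightarrow> length w = n"
  shows "card {w \<in> W. bordered w} = (\<Sum>i = 1..n div 2. card {w \<in> W. unbordered_border i w})"
proof -
  have "bordered w \<longleftrightarrow> (\<exists>i \<in> {1..n div 2}. unbordered_border i w)" if "length w = n" for w
  proof -
    have "0 < i" if "unbordered_border i w" for i
      using that unfolding unbordered_border_def is_border_def by simp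
    moreover have "i \<in> {1..n div 2} \<longleftrightarrow> 0 < i \<and> 2 * i \<le> n" for i
      by auto
    ultimately show ?thesis
      unfolding bordered_iff_unbordered_border using that by blast
  qed
  then have "{w \<in> W. bordered w} = (\<Union>i \<in> {1..n div 2}. {w \<in> W. unbordered_border i w})"
    using assms(2) by blast
  moreover have "card (\<Union>i \<in> {1..n div 2}. {w \<in> W. unbordered_border i w})
      = (\<Sum>i = 1..n div 2. card {w \<in> W. unbordered_border i w})"
  proof (rule card_UN_disjoint)
    show "\<forall>i \<in> {1..n div 2}. finite {w \<in> W. unbordered_border i w}"
      using assms(1) by simp
    show "\<forall>i \<in> {1..n div 2}. \<forall>j \<in> {1..n div 2}. i \<noteq> j \<longrightarrow>
        {w \<in> W. unbordered_border i w} \<inter> {w \<in> W. unbordered_border j w} = {}"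
      using unbordered_border_unique by blast
  qed simp
  ultimately show ?thesis by simp
qed

definition prefixed_words :: "nat set \<Rightarrow> nat list \<Rightarrow> nat \<Rightarrow> nat list set" where
  "prefixed_words A u n = {w. set w \<subseteq> A \<and> length w = n \<and> take (length u) w = u}"

lemma finite_prefixed_words: "finite A \<Longrightarrow> finite (prefixed_words A u n)"
  unfolding prefixed_words_def
  by (rule finite_subset[OF _ finite_lists_length_eq[of A n]]) auto

lemma length_prefixed_words: "w \<in> prefixed_words A u n \<Longrightarrow> length w = n"
  unfolding prefixed_words_def by simp

lemma Bk_eq_card_prefixed_words: "Bk k u n = card {w \<in> prefixed_words {1..k} u n. bordered w}"
  unfolding Bk_def prefixed_words_def by (rule arg_cong[where f = card]) auto

lemma card_prefix_suffix_words:
  assumes "finite A" "set u \<subseteq> A" "set x \<subseteq> A" "length u + length x \<le> n"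
  shows "card {w \<in> prefixed_words A u n. drop (n - length x) w = x}
    = card A ^ (n - length u - length x)"
proof -
  let ?M = "{m. set m \<subseteq> A \<and> length m = n - length u - length x}"
  have "{w \<in> prefixed_words A u n. drop (n - length x) w = x} = (\<lambda>m. u @ m @ x) ` ?M"
  proof (intro set_eqI iffI)
    fix w assume w: "w \<in> {w \<in> prefixed_words A u n. drop (n - length x) w = x}"
    define m where "m = take (n - length u - length x) (drop (length u) w)"
    have "drop (n - length u - length x) (drop (length u) w) = drop (n - length x) w"
      using assms(4) by simp
    then have "drop (length u) w = m @ x"
      using w unfolding m_def by (metis (mono_tags) mem_Collect_eq append_take_drop_id)
    then have "w = u @ m @ x"
      using w unfolding prefixed_words_def by (metis (mono_tags) mem_Collect_eq append_take_drop_id)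
    moreover have "m \<in> ?M"
      using w assms(4) unfolding m_def prefixed_words_def by (auto dest: in_set_takeD in_set_dropD)
    ultimately show "w \<in> (\<lambda>m. u @ m @ x) ` ?M" by blast
  next
    fix w assume "w \<in> (\<lambda>m. u @ m @ x) ` ?M"
    then show "w \<in> {w \<in> prefixed_words A u n. drop (n - length x) w = x}"
      using assms unfolding prefixed_words_def by auto
  qed
  moreover have "inj_on (\<lambda>m. u @ m @ x) ?M" by (rule inj_onI) simp
  ultimately show ?thesis
    using assms(1) by (simp add: card_image card_lists_length_eq)
qed

lemma prefix_suffix_words_overlap:
  assumes "set u \<subseteq> A" "set x \<subseteq> A" "length u \<le> n" "length x \<le> n" "n < length u + length x"
  defines "j \<equiv> length u + length x - n"
  shows "{w \<in> prefixed_words A u n. drop (n - length x) w = x}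
    = (if drop (n - length x) u = take j x then {u @ drop j x} else {})"
proof -
  have "drop (n - length x) w = x \<longleftrightarrow> drop (n - length x) u = take j x \<and> w = u @ drop j x"
    if "w \<in> prefixed_words A u n" for w
  proof -
    have w: "w = u @ drop (length u) w"
      using that unfolding prefixed_words_def by (metis (mono_tags) mem_Collect_eq append_take_drop_id)
    have "drop (n - length x) w = drop (n - length x) u @ drop (length u) w"
      using assms(5) by (subst w) simp
    moreover have "length (drop (n - length x) u) = length (take j x)"
      using assms(3,4,5) unfolding j_def by (auto simp: min_def)
    ultimately show ?thesis
      using append_eq_append_conv append_take_drop_id[of j x] same_append_eq w by metis
  qed
  then have "{w \<in> prefixed_words A u n. drop (n - length x) w = x}
      = {w \<in> prefixed_words A u n. drop (n - length x) u = take j x \<and> w = u @ drop j x}"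
    by blast
  moreover have "u @ drop j x \<in> prefixed_words A u n"
    using assms unfolding prefixed_words_def j_def by (auto dest: in_set_dropD)
  ultimately show ?thesis by auto
qed

lemma card_prefixed_words:
  assumes "finite A" "set u \<subseteq> A" "length u \<le> n"
  shows "card (prefixed_words A u n) = card A ^ (n - length u)"
proof -
  have "{w \<in> prefixed_words A u n. drop (n - length []) w = []} = prefixed_words A u n"
    by (auto simp: prefixed_words_def)
  then show ?thesis
    using card_prefix_suffix_words[of A u "[]" n] assms by simp
qed

lemma card_bordered_add_unbordered:
  assumes "finite A" "set u \<subseteq> A" "length u \<le> n"
  shows "card {w \<in> prefixed_words A u n. bordered w} + card {w \<in> prefixed_words A u n. \<not> bordered w}
    = card A ^ (n - length u)"
proof -
  have "prefixed_words A u n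
      = {w \<in> prefixed_words A u n. bordered w} \<union> {w \<in> prefixed_words A u n. \<not> bordered w}"
    by blast
  then show ?thesis
    using assms card_prefixed_words finite_prefixed_words[OF assms(1)]
    by (metis (no_types, lifting) card_Un_disjoint disjoint_iff finite_Un mem_Collect_eq)
qed

lemma unbordered_border_within_prefix:
  assumes "0 < i" "i \<le> length u" "2 * i \<le> n"
  shows "{w \<in> prefixed_words A u n. unbordered_border i w}
    = (if bordered (take i u) then {} else {w \<in> prefixed_words A u n. drop (n - i) w = take i u})"
proof -
  have "take i w = take i u" "length w = n" if "w \<in> prefixed_words A u n" for w
    using that assms(2) unfolding prefixed_words_def by (metis (mono_tags) mem_Collect_eq take_take min_absorb1)+
  then show ?thesis
    using assms unfolding unbordered_border_def is_border_def by auto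
qed

lemma card_unbordered_border_within_prefix_disjoint:
  assumes "finite A" "set u \<subseteq> A" "0 < i" "i \<le> length u" "length u + i \<le> n"
  shows "card {w \<in> prefixed_words A u n. unbordered_border i w} = unb_ind u i * card A ^ (n - length u - i)"
proof -
  have "set (take i u) \<subseteq> A" using assms(2) by (meson order_trans set_take_subset)
  then show ?thesis
    using assms unbordered_border_within_prefix[of i u n A]
      card_prefix_suffix_words[of A u "take i u" n]
    by (simp add: unb_ind_def)
qed

lemma card_unbordered_border_within_prefix_overlap:
  assumes "set u \<subseteq> A" "0 < i" "i \<le> length u" "2 * i \<le> n" "length u \<le> n" "n < length u + i"
  shows "card {w \<in> prefixed_words A u n. unbordered_border i w}
    = unb_ind u i * border_ind u (i - (n - length u))"
proof -
  let ?j = "length u + i - n"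
  have j: "i - (n - length u) = ?j" using assms(5) by simp
  have "set (take i u) \<subseteq> A" using assms(1) by (meson order_trans set_take_subset)
  then have "{w \<in> prefixed_words A u n. drop (n - i) w = take i u}
      = (if drop (n - i) u = take ?j u then {u @ drop ?j (take i u)} else {})"
    using assms prefix_suffix_words_overlap[of u A "take i u" n] by simp
  moreover have "border_ind u ?j = (if drop (n - i) u = take ?j u then 1 else 0)"
    using assms unfolding border_ind_def by auto
  ultimately show ?thesis
    using assms unbordered_border_within_prefix[of i u n A] unfolding j by (simp add: unb_ind_def)
qed

lemma inj_on_sandwich:
  assumes "\<And>x. x \<in> X \<Longrightarrow> length x = i"
  shows "inj_on (\<lambda>(x, m). x @ m @ x) (X \<times> M)"
proof (rule inj_onI)
  fix a b assume a: "a \<in> X \<times> M" and b: "b \<in> X \<times> M"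
    and eq: "(\<lambda>(x, m). x @ m @ x) a = (\<lambda>(x, m). x @ m @ x) b"
  obtain x m y l where ab: "a = (x, m)" "b = (y, l)" by (cases a, cases b)
  have "length x = length y" using a b assms unfolding ab by simp
  then show "a = b" using eq unfolding ab by simp
qed

lemma unbordered_border_beyond_prefix:
  assumes "0 < i" "length u \<le> i" "2 * i \<le> n"
  shows "{w \<in> prefixed_words A u n. unbordered_border i w}
    = (\<lambda>(x, m). x @ m @ x) ` ({x \<in> prefixed_words A u i. \<not> bordered x}
        \<times> {m. set m \<subseteq> A \<and> length m = n - 2 * i})"
    (is "_ = ?f ` (?X \<times> ?M)")
proof (intro set_eqI iffI)
  fix w assume "w \<in> {w \<in> prefixed_words A u n. unbordered_border i w}"
  then have w: "set w \<subseteq> A" "length w = n" "take (length u) w = u"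
      "take i w = drop (n - i) w" "\<not> bordered (take i w)"
    unfolding prefixed_words_def unbordered_border_def is_border_def by auto
  define x where "x = take i w"
  define m where "m = take (n - 2 * i) (drop i w)"
  have "drop (n - 2 * i) (drop i w) = drop (n - i) w"
    using assms(3) by (simp add: add.commute)
  then have "drop i w = m @ x"
    using w(4) unfolding m_def x_def by (metis append_take_drop_id)
  then have "w = x @ m @ x"
    unfolding x_def by (metis append_take_drop_id)
  moreover have "x \<in> ?X"
  proof -
    have "set x \<subseteq> A"
      using w(1) set_take_subset unfolding x_def by (rule order_trans[rotated])
    moreover have "length x = i" "\<not> bordered x"
      using w(2,5) assms(3) unfolding x_def by simp_all
    moreover have "take (length u) x = u"
      using w(3) assms(2) unfolding x_def by (metis min.absorb1 take_take)
    ultimately show ?thesis unfolding prefixed_words_def by blast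
  qed
  moreover have "m \<in> ?M"
    using w(1,2) unfolding m_def by (auto dest: in_set_takeD in_set_dropD)
  ultimately show "w \<in> ?f ` (?X \<times> ?M)"
    by (intro image_eqI[where x = "(x, m)"]) simp_all
next
  fix w assume "w \<in> ?f ` (?X \<times> ?M)"
  then obtain x m where w: "w = x @ m @ x" and x: "x \<in> ?X" and m: "m \<in> ?M" by auto
  have x: "length x = i" "set x \<subseteq> A" "take (length u) x = u" "\<not> bordered x"
    using x unfolding prefixed_words_def by auto
  have m: "length m = n - 2 * i" "set m \<subseteq> A" using m by auto
  have "length w = n" "take i w = x" "drop (n - i) w = x"
    using x(1) m(1) assms(3) unfolding w by simp_all
  moreover have "take (length u) w = u" "set w \<subseteq> A"
    using x m assms(2) unfolding w by simp_all
  ultimately show "w \<in> {w \<in> prefixed_words A u n. unbordered_border i w}"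
    using x(4) assms(1,3) unfolding prefixed_words_def unbordered_border_def is_border_def by simp
qed

lemma card_unbordered_border_beyond_prefix:
  assumes "finite A" "set u \<subseteq> A" "length u < i" "2 * i \<le> n"
  shows "int (card {w \<in> prefixed_words A u n. unbordered_border i w})
    = (int (card A) ^ (i - length u) - int (card {x \<in> prefixed_words A u i. bordered x}))
      * int (card A) ^ (n - 2 * i)"
proof -
  let ?X = "{x \<in> prefixed_words A u i. \<not> bordered x}"
  let ?B = "{x \<in> prefixed_words A u i. bordered x}"
  have "card {w \<in> prefixed_words A u n. unbordered_border i w}
      = card ?X * card {m. set m \<subseteq> A \<and> length m = n - 2 * i}"
    using assms unbordered_border_beyond_prefix[of i u n A]
      inj_on_sandwich[of ?X i] length_prefixed_words[of _ A u i]
    by (simp add: card_image card_cartesian_product)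
  also have "\<dots> = card ?X * card A ^ (n - 2 * i)"
    by (simp only: card_lists_length_eq[OF assms(1)])
  finally have "int (card {w \<in> prefixed_words A u n. unbordered_border i w})
      = int (card ?X) * int (card A) ^ (n - 2 * i)"
    by simp
  moreover have "card ?B + card ?X = card A ^ (i - length u)"
    using card_bordered_add_unbordered[of A u i] assms by simp
  then have "int (card ?B) + int (card ?X) = int (card A) ^ (i - length u)"
    by (metis of_nat_add of_nat_power)
  then have "int (card ?X) = int (card A) ^ (i - length u) - int (card ?B)"
    by linarith
  ultimately show ?thesis
    by simp
qed

lemma Bk_eq_sum_card_unbordered_border:
  "Bk k u n = (\<Sum>i = 1..n div 2. card {w \<in> prefixed_words {1..k} u n. unbordered_border i w})"
  unfolding Bk_eq_card_prefixed_words
  by (simp add: card_bordered_eq_sum[OF finite_prefixed_words] length_prefixed_words)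

theorem theorem5:
  fixes n p k :: nat and u :: "nat list"
  assumes "1 \<le> p" and "p \<le> n" and "2 \<le> k"
    and "length u = p" and "set u \<subseteq> {1..k}"
  shows "int (Bk k u n) =
    (if n \<le> 2 * p then
       (\<Sum>i = 1..n - p. int (unb_ind u i) * int k ^ (n - p - i))
       + (\<Sum>i = n - p + 1..n div 2. int (unb_ind u i) * int (border_ind u (i - (n - p))))
     else
       (\<Sum>i = 1..p. int (unb_ind u i) * int k ^ (n - p - i))
       + (\<Sum>i = p + 1..n div 2. (int k ^ (i - p) - int (Bk k u i)) * int k ^ (n - 2 * i)))"
proof -
  let ?c = "\<lambda>i. int (card {w \<in> prefixed_words {1..k} u n. unbordered_border i w})"
  have total: "int (Bk k u n) = (\<Sum>i = 1..m. ?c i) + (\<Sum>i = m + 1..n div 2. ?c i)"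
    if "m \<le> n div 2" for m
    using sum.ub_add_nat[of 1 m ?c "n div 2 - m"] that
    by (simp add: Bk_eq_sum_card_unbordered_border)
  have short: "(\<Sum>i = 1..m. ?c i) = (\<Sum>i = 1..m. int (unb_ind u i) * int k ^ (n - p - i))"
    if "m \<le> p" "m + p \<le> n" for m
    using that assms by (intro sum.cong refl) (simp add: card_unbordered_border_within_prefix_disjoint)
  show ?thesis
  proof (cases "n \<le> 2 * p")
    case True
    have "(\<Sum>i = n - p + 1..n div 2. ?c i)
        = (\<Sum>i = n - p + 1..n div 2. int (unb_ind u i) * int (border_ind u (i - (n - p))))"
    proof (intro sum.cong refl)
      fix i assume "i \<in> {n - p + 1..n div 2}"
      then have "0 < i" "i \<le> p" "2 * i \<le> n" "n < p + i" using True by auto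
      then show "?c i = int (unb_ind u i) * int (border_ind u (i - (n - p)))"
        using assms by (simp add: card_unbordered_border_within_prefix_overlap)
    qed
    then show ?thesis
      using True total[of "n - p"] short[of "n - p"] assms(2) by simp
  next
    case False
    have "(\<Sum>i = p + 1..n div 2. ?c i)
        = (\<Sum>i = p + 1..n div 2. (int k ^ (i - p) - int (Bk k u i)) * int k ^ (n - 2 * i))"
    proof (intro sum.cong refl)
      fix i assume "i \<in> {p + 1..n div 2}"
      then have "p < i" "2 * i \<le> n" by auto
      then show "?c i = (int k ^ (i - p) - int (Bk k u i)) * int k ^ (n - 2 * i)"
        using assms by (simp add: card_unbordered_border_beyond_prefix Bk_eq_card_prefixed_words)
    qed
    then show ?thesis
      using False total[of p] short[of p] by simp
  qed
qed

end
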